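(* Let $D=N_1\ltimes\dots\ltimes N_n$ be the dynamics of an $\mathrm{RNC}_+$ with input domain $U$, let $D'=\langle U,X',f\rangle$ be subdynamics of $D$, let $\lambda_\Sigma:U\to\Sigma$ be a symbol grounding and $u_e\in U$. For every $i\in[n]$ and every $\vec x,\vec y\in X'_{[i]}$, if $\bar\rho_i(\vec x)=\bar\rho_i(\vec y)$ then $\vec x\sim\vec y$.
   Context: Neuron $N_i$ has state update $f_i(x_i,\langle u,x_1,\dots,x_{i-1}\rangle)=\tanh(w_i x_i+\beta_i(u,x_1,\dots,x_{i-1}))$ with $w_i>0$ and $\beta_i$ a feedforward network; $\bar f_i(\langle x_1,\dots,x_i\rangle,u)=\langle f_1(x_1,u_1),\dots,f_i(x_i,u_i)\rangle$ with $u_j=\langle u,x_1,\dots,x_{j-1}\rangle$. $X'\subseteq X_1\times\dots\times X_n$ satisfies $f(X'\times U)\subseteq X'$, and $X'_{[i]}=\{\langle z_1,\dots,z_i\rangle:\exists z_{i+1},\dots,z_n,\ \langle z_1,\dots,z_n\rangle\in X'\}$. For $\vec x=\langle x_1,\dots,x_i\rangle$, define $x_{j,0}=x_j$, $x_{j,t}=f_j(x_{j,t-1},\langle u_e,x_{1,t-1},\dots,x_{j-1,t-1}\rangle)$, let $\mathcal{S}^*_j(u_e,x_1,\dots,x_j)=\lim_t x_{j,t}$ (this limit exists) and $\bar{\mathcal{S}}^*_i(u_e,\vec x)=\langle\mathcal S^*_1(u_e,x_1),\dots,\mathcal S^*_i(u_e,x_1,\dots,x_i)\rangle$. On $X'_{[i]}$: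 $\sim_e$ is the smallest equivalence relation with $\vec x\sim_e\vec y$ whenever $\bar{\mathcal S}^*_i(u_e,\vec x)=\bar{\mathcal S}^*_i(u_e,\vec y)$; $\sim$ is the smallest equivalence relation containing $\sim_e$ and such that $\vec x\sim\vec y$ implies $\bar f_i(\vec x,u)\sim\bar f_i(\vec y,v)$ for all $u,v\in U$ with $\lambda_\Sigma(u)=\lambda_\Sigma(v)$; $[\vec x]$ denotes the $\sim$-class. Pivots: for neuron $j$ with $w_j>1$, let $p_-^{(j)},p_+^{(j)}$ be the pivots $p_-=p_-^{v_-}$, $p_+=p_+^{v_+}$ of $g_v(x)=x-\tanh(w_jx+v)$, where $p_-^v<p_+^v$ are the local maximum/minimum points of $g_v$ and $v_-$ (resp. $v_+$) is the unique $v$ with $g_v(p_-^v)=0$ (resp. $g_v(p_+^v)=0$). Let $\kappa_j(x)=1$ if $x\le p_-^{(j)}$, $2$ if $p_-^{(j)}<x<p_+^{(j)}$, $3$ if $p_+^{(j)}\le x$ (when $w_j\le1$, $\kappa_j$ is an arbitrary map into $\{1,2,3\}$). Set $\eta_j(x_1,\dots,x_j)=\kappa_j(\mathcal S^*_j(u_e,x_1,\dots,x_j))$, $\bar\eta_i(\vec x)=\langle\eta_1(x_1),\dots,\eta_i(x_1,\dots,x_i)\rangle\in\{1,2,3\}^i$, and $\bar\rho_i(\vec x)=\min\bar\eta_i([\vec x])$, the minimum in the lexicographic order on $\{1,2,3\}^i$. *)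

theory Defs
  imports Complex_Main "HOL-Library.List_Lexorder"
begin

text \<open>States of an i-neuron prefix are real lists of length i; neuron j is 0-indexed
  (neuron j here is neuron N_(j+1) of the paper). w j is its self-weight and
  beta j u xs its bias network applied to the input u and the previous states xs
  (a list of length j).\<close>

definition nstep :: "(nat \<Rightarrow> real) \<Rightarrow> (nat \<Rightarrow> 'u \<Rightarrow> real list \<Rightarrow> real) \<Rightarrow> real list \<Rightarrow> 'u \<Rightarrow> real list" where
  "nstep w beta xs u = map (\<lambda>j. tanh (w j * xs ! j + beta j u (take j xs))) [0..<length xs]"

definition Sstar :: "(nat \<Rightarrow> real) \<Rightarrow> (nat \<Rightarrow> 'u \<Rightarrow> real list \<Rightarrow> real) \<Rightarrow> 'u \<Rightarrow> real list \<Rightarrow> real list" where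
  "Sstar w beta ue xs = map (\<lambda>j. lim (\<lambda>t. (((\<lambda>z. nstep w beta z ue) ^^ t) xs) ! j)) [0..<length xs]"

definition prefixes :: "real list set \<Rightarrow> nat \<Rightarrow> real list set" where
  "prefixes X i = (\<lambda>z. take i z) ` X"

definition list_continuous :: "nat \<Rightarrow> (real list \<Rightarrow> real) \<Rightarrow> bool" where
  "list_continuous k g \<longleftrightarrow> (\<forall>xs X. length xs = k \<longrightarrow> (\<forall>t. length (X t) = k) \<longrightarrow>
      (\<forall>j<k. (\<lambda>t. X t ! j) \<longlonglongrightarrow> xs ! j) \<longrightarrow> (\<lambda>t. g (X t)) \<longlonglongrightarrow> g xs)"

text \<open>The relation \<sim> on Xi = X'_[i]: the smallest equivalence relation containing \<sim>_e
  and closed under the congruence rule.\<close>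
inductive_set simrel :: "(nat \<Rightarrow> real) \<Rightarrow> (nat \<Rightarrow> 'u \<Rightarrow> real list \<Rightarrow> real) \<Rightarrow> 'u set \<Rightarrow> ('u \<Rightarrow> 's)
    \<Rightarrow> 'u \<Rightarrow> real list set \<Rightarrow> (real list \<times> real list) set"
  for w beta U lam ue Xi where
  base: "x \<in> Xi \<Longrightarrow> y \<in> Xi \<Longrightarrow> Sstar w beta ue x = Sstar w beta ue y \<Longrightarrow> (x, y) \<in> simrel w beta U lam ue Xi"
| sym: "(x, y) \<in> simrel w beta U lam ue Xi \<Longrightarrow> (y, x) \<in> simrel w beta U lam ue Xi"
| trans: "(x, y) \<in> simrel w beta U lam ue Xi \<Longrightarrow> (y, z) \<in> simrel w beta U lam ue Xi \<Longrightarrow> (x, z) \<in> simrel w beta U lam ue Xi"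
| cong: "(x, y) \<in> simrel w beta U lam ue Xi \<Longrightarrow> u \<in> U \<Longrightarrow> v \<in> U \<Longrightarrow> lam u = lam v \<Longrightarrow>
         (nstep w beta x u, nstep w beta y v) \<in> simrel w beta U lam ue Xi"

definition gfun :: "real \<Rightarrow> real \<Rightarrow> real \<Rightarrow> real" where
  "gfun w v x = x - tanh (w * x + v)"

definition is_loc_max :: "(real \<Rightarrow> real) \<Rightarrow> real \<Rightarrow> bool" where
  "is_loc_max f p \<longleftrightarrow> (\<exists>e>0. \<forall>y. \<bar>y - p\<bar> < e \<longrightarrow> f y \<le> f p)"

definition is_loc_min :: "(real \<Rightarrow> real) \<Rightarrow> real \<Rightarrow> bool" where
  "is_loc_min f p \<longleftrightarrow> (\<exists>e>0. \<forall>y. \<bar>y - p\<bar> < e \<longrightarrow> f p \<le> f y)"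

definition pm_v :: "real \<Rightarrow> real \<Rightarrow> real" where
  "pm_v w v = (THE p. is_loc_max (gfun w v) p)"

definition pp_v :: "real \<Rightarrow> real \<Rightarrow> real" where
  "pp_v w v = (THE p. is_loc_min (gfun w v) p)"

definition p_minus :: "real \<Rightarrow> real" where
  "p_minus w = pm_v w (THE v. gfun w v (pm_v w v) = 0)"

definition p_plus :: "real \<Rightarrow> real" where
  "p_plus w = pp_v w (THE v. gfun w v (pp_v w v) = 0)"

text \<open>kappa; k is the arbitrary map used for neurons with w j \<le> 1.\<close>
definition kappa :: "(nat \<Rightarrow> real) \<Rightarrow> (nat \<Rightarrow> real \<Rightarrow> nat) \<Rightarrow> nat \<Rightarrow> real \<Rightarrow> nat" where
  "kappa w k j x = (if 1 < w j then
      (if x \<le> p_minus (w j) then 1 else if x < p_plus (w j) then 2 else 3)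
    else k j x)"

definition etabar :: "(nat \<Rightarrow> real) \<Rightarrow> (nat \<Rightarrow> 'u \<Rightarrow> real list \<Rightarrow> real) \<Rightarrow> 'u \<Rightarrow> (nat \<Rightarrow> real \<Rightarrow> nat)
    \<Rightarrow> real list \<Rightarrow> nat list" where
  "etabar w beta ue k xs = map (\<lambda>j. kappa w k j (Sstar w beta ue xs ! j)) [0..<length xs]"

text \<open>Min w.r.t. the lexicographic order on lists (HOL-Library.List_Lexorder).\<close>
definition rhobar :: "(nat \<Rightarrow> real) \<Rightarrow> (nat \<Rightarrow> 'u \<Rightarrow> real list \<Rightarrow> real) \<Rightarrow> 'u set \<Rightarrow> ('u \<Rightarrow> 's)
    \<Rightarrow> 'u \<Rightarrow> (nat \<Rightarrow> real \<Rightarrow> nat) \<Rightarrow> real list set \<Rightarrow> real list \<Rightarrow> nat list" where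
  "rhobar w beta U lam ue k Xi x = Min (etabar w beta ue k ` {y. (x, y) \<in> simrel w beta U lam ue Xi})"

end

theory Submission imports Defs begin

text \<open>Between two fixed points of \<open>z \<mapsto> tanh (w * z + b)\<close> the slope \<open>w * (1 - tanh\<^sup>2)\<close>
  passes through \<open>1\<close>, i.e. \<open>\<bar>tanh\<bar> = sqrt (1 - 1 / w)\<close> there. For \<open>w > 1\<close> these two
  values are exactly the pivots, so each of the three regions they cut out contains at most
  one fixed point; for \<open>w \<le> 1\<close> the fixed point is unique anyway. Since driven \<open>tanh\<close>
  iterations converge, every component of \<open>S*\<close> is a fixed point of its neuron with the
  limiting bias, so \<open>S*\<close> is recovered neuron by neuron from its \<open>\<eta>\<close>-values. Choosing
  \<open>x' \<sim> x\<close> and \<open>y' \<sim> y\<close> that realise the minima \<open>\<rho>(x) = \<rho>(y)\<close> thus gives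
  \<open>S*(x') = S*(y')\<close>, whence \<open>x \<sim> x' \<sim>\<^sub>e y' \<sim> y\<close>.\<close>

section \<open>Fixed points of \<open>z \<mapsto> tanh (w * z + b)\<close>\<close>

lemma gfun_has_real_derivative:
  "(gfun w v has_real_derivative (1 - w * (1 - tanh (w * x + v)^2))) (at x)"
  unfolding gfun_def[abs_def] by (rule derivative_eq_intros refl | simp add: algebra_simps)+

lemma tanh_squared_less_1: "tanh x ^ 2 < (1::real)"
  using tanh_real_bounds[of x] by (simp add: abs_square_less_1 abs_less_iff)

lemma tanh_fixed_points_between:
  fixes w b x y :: real
  assumes "0 \<le> w" "x < y" "tanh (w * x + b) = x" "tanh (w * y + b) = y"
  obtains t where "x < t" "t < y" "w * (1 - t^2) = 1"
proof -
  obtain \<xi> where "x < \<xi>" "\<xi> < y"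
    and mvt: "gfun w b y - gfun w b x = (y - x) * (1 - w * (1 - tanh (w * \<xi> + b)^2))"
    using MVT2[OF \<open>x < y\<close>, of "gfun w b" "\<lambda>z. 1 - w * (1 - tanh (w * z + b)^2)"]
      gfun_has_real_derivative by blast
  have "gfun w b x = 0" "gfun w b y = 0"
    using assms(3,4) by (simp_all add: gfun_def)
  with mvt \<open>x < y\<close> have slope: "w * (1 - tanh (w * \<xi> + b)^2) = 1" by simp
  then have "0 < w" using \<open>0 \<le> w\<close> by (cases "w = 0") auto
  with \<open>x < \<xi>\<close> \<open>\<xi> < y\<close> assms(3,4) have "x < tanh (w * \<xi> + b)" "tanh (w * \<xi> + b) < y"
    by (metis add_strict_right_mono mult_strict_left_mono tanh_real_less_iff)+
  with slope that show thesis by blast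
qed

text \<open>The slope-one points between consecutive fixed points would be three distinct reals
  with the same square.\<close>
lemma tanh_no_four_fixed_points:
  fixes w b z1 z2 z3 z4 :: real
  assumes "0 \<le> w" "z1 < z2" "z2 < z3" "z3 < z4"
    and "tanh (w * z1 + b) = z1" "tanh (w * z2 + b) = z2"
    and "tanh (w * z3 + b) = z3" "tanh (w * z4 + b) = z4"
  shows False
proof -
  obtain t1 where t1: "z1 < t1" "t1 < z2" "w * (1 - t1^2) = 1"
    using tanh_fixed_points_between[of w z1 z2 b] assms by blast
  obtain t2 where t2: "z2 < t2" "t2 < z3" "w * (1 - t2^2) = 1"
    using tanh_fixed_points_between[of w z2 z3 b] assms by blast
  obtain t3 where t3: "z3 < t3" "t3 < z4" "w * (1 - t3^2) = 1"
    using tanh_fixed_points_between[of w z3 z4 b] assms by blast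
  have "w \<noteq> 0" using t1 by auto
  then have "t1^2 = t2^2" "t3^2 = t2^2"
    using t1(3) t2(3) t3(3) by (metis mult_cancel_left right_minus_eq diff_left_imp_eq)+
  then have "t1 = - t2" "t3 = - t2"
    using t1 t2 t3 \<open>z2 < z3\<close> by (auto simp: power2_eq_iff)
  then show False using t1 t2 t3 \<open>z2 < z3\<close> by linarith
qed

lemma tanh_nonfixed_point_between:
  fixes w b p q :: real
  assumes "0 \<le> w" "p < q"
  obtains z where "p < z" "z < q" "tanh (w * z + b) \<noteq> z"
proof -
  define d where "d = (q - p) / 5"
  have d: "0 < d" "p + 5 * d = q" using assms(2) by (simp_all add: d_def field_simps)
  have "\<not> (\<forall>z. p < z \<longrightarrow> z < q \<longrightarrow> tanh (w * z + b) = z)"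
  proof
    assume fixed: "\<forall>z. p < z \<longrightarrow> z < q \<longrightarrow> tanh (w * z + b) = z"
    show False
      by (rule tanh_no_four_fixed_points[OF assms(1), of "p + 1 * d" "p + 2 * d" "p + 3 * d" "p + 4 * d" b])
        (use d fixed in auto)
  qed
  with that show thesis by blast
qed

lemma gfun_mono_of_le_1:
  fixes w b x y :: real
  assumes "0 \<le> w" "w \<le> 1" "x \<le> y"
  shows "gfun w b x \<le> gfun w b y"
proof (rule DERIV_nonneg_imp_nondecreasing[OF assms(3)])
  fix z :: real
  have "w * (1 - tanh (w * z + b)^2) \<le> 1"
    using assms(1,2) tanh_squared_less_1[of "w * z + b"]
    by (intro mult_le_one) auto
  then show "\<exists>d. (gfun w b has_real_derivative d) (at z) \<and> 0 \<le> d"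
    using gfun_has_real_derivative by fastforce
qed

lemma tanh_fixed_point_unique_of_le_1:
  fixes w b x y :: real
  assumes "0 \<le> w" "w \<le> 1" "tanh (w * x + b) = x" "tanh (w * y + b) = y"
  shows "x = y"
proof (rule ccontr)
  assume "x \<noteq> y"
  then obtain l r where lr: "l < r" "tanh (w * l + b) = l" "tanh (w * r + b) = r"
    using assms(3,4) by (metis linorder_neqE_linordered_idom)
  have fixed: "tanh (w * z + b) = z" if "l \<le> z" "z \<le> r" for z
    using gfun_mono_of_le_1[OF assms(1,2) that(1), of b] gfun_mono_of_le_1[OF assms(1,2) that(2), of b] lr
    by (simp add: gfun_def)
  define d where "d = (r - l) / 3"
  have d: "0 < d" "l + 3 * d = r" using lr(1) by (simp_all add: d_def field_simps)
  show False
    by (rule tanh_no_four_fixed_points[OF assms(1), of l "l + d" "l + 2 * d" r b]) (use d fixed in auto)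
qed

lemma sqrt_one_minus_inverse:
  fixes w :: real
  assumes "1 < w"
  shows "0 < sqrt (1 - 1 / w)" "sqrt (1 - 1 / w) < 1" "(sqrt (1 - 1 / w))^2 = 1 - 1 / w"
proof -
  have "0 < 1 - 1 / w" "1 - 1 / w < 1" using assms by (simp_all add: field_simps)
  then show "0 < sqrt (1 - 1 / w)" "sqrt (1 - 1 / w) < 1" "(sqrt (1 - 1 / w))^2 = 1 - 1 / w"
    by (simp_all add: real_sqrt_less_iff[of _ 1, simplified])
qed

lemma slope_one_iff:
  fixes w t :: real
  assumes "1 < w"
  shows "w * (1 - t^2) = 1 \<longleftrightarrow> \<bar>t\<bar> = sqrt (1 - 1 / w)"
proof -
  have "w * (1 - t^2) = 1 \<longleftrightarrow> \<bar>t\<bar>^2 = 1 - 1 / w"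
    using assms by (auto simp: field_simps)
  also have "\<dots> \<longleftrightarrow> \<bar>t\<bar>^2 = (sqrt (1 - 1 / w))^2"
    using sqrt_one_minus_inverse[OF assms] by simp
  also have "\<dots> \<longleftrightarrow> \<bar>t\<bar> = sqrt (1 - 1 / w)"
    using sqrt_one_minus_inverse[OF assms] by (intro power2_eq_iff_nonneg) auto
  finally show ?thesis .
qed

text \<open>The three regions are those cut out by the pivots \<open>\<mp> sqrt (1 - 1 / w)\<close>
  (see \<open>p_minus_eq\<close> and \<open>p_plus_eq\<close> below).\<close>
lemma tanh_no_two_fixed_points_in_region:
  fixes w b x y :: real
  defines "c \<equiv> sqrt (1 - 1 / w)"
  assumes "1 < w" "x < y" "tanh (w * x + b) = x" "tanh (w * y + b) = y"
    and "y \<le> - c \<or> (- c < x \<and> y < c) \<or> c \<le> x"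
  shows False
proof -
  obtain t where "x < t" "t < y" "w * (1 - t^2) = 1"
    using tanh_fixed_points_between[of w x y b] assms by auto
  with slope_one_iff[OF \<open>1 < w\<close>] assms(6) show False unfolding c_def by force
qed

section \<open>Driven \<open>tanh\<close> iterations converge\<close>

lemma tanh_diff_le_diff:
  fixes a a' :: real
  assumes "a' \<le> a"
  shows "tanh a - tanh a' \<le> a - a'"
proof -
  have "a' - tanh a' \<le> a - tanh a"
    by (rule DERIV_nonneg_imp_nondecreasing[OF assms], rule exI[of _ "tanh _ ^ 2"])
      (auto intro!: derivative_eq_intros)
  then show ?thesis by simp
qed

text \<open>Once the input has settled near \<open>b0\<close>, a point \<open>z\<close> that is pushed upwards by
  \<open>tanh (w * _ + b0)\<close> can only be crossed from below: the orbit stays above \<open>z\<close> after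
  the first time it reaches it.\<close>
lemma tanh_iteration_eventually_side_of_gt:
  fixes w b0 z :: real and b x :: "nat \<Rightarrow> real"
  assumes "0 \<le> w" "b \<longlonglongrightarrow> b0" "\<And>t. x (Suc t) = tanh (w * x t + b t)" "z < tanh (w * z + b0)"
  shows "eventually (\<lambda>t. z < x t) sequentially \<or> eventually (\<lambda>t. x t < z) sequentially"
proof -
  define \<delta> where "\<delta> = tanh (w * z + b0) - z"
  have "0 < \<delta>" using assms(4) by (simp add: \<delta>_def)
  then obtain T where T: "\<And>t. T \<le> t \<Longrightarrow> b0 - \<delta> < b t"
    using order_tendstoD(1)[OF assms(2), of "b0 - \<delta>"] by (auto simp: eventually_sequentially)
  have stays_above: "z < x (Suc t)" if "T \<le> t" "z \<le> x t" for t
  proof -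
    have "tanh (w * z + b t) \<le> tanh (w * x t + b t)"
      using that(2) assms(1) by (simp add: mult_left_mono)
    moreover have "z < tanh (w * z + b t)"
    proof (cases "b0 \<le> b t")
      case True
      then have "tanh (w * z + b0) \<le> tanh (w * z + b t)" by simp
      then show ?thesis using assms(4) by linarith
    next
      case False
      then have "tanh (w * z + b0) - tanh (w * z + b t) \<le> b0 - b t"
        using tanh_diff_le_diff[of "w * z + b t" "w * z + b0"] by simp
      then show ?thesis using T[OF that(1)] by (simp add: \<delta>_def)
    qed
    ultimately show ?thesis using assms(3)[of t] by linarith
  qed
  show ?thesis
  proof (cases "\<exists>t\<ge>T. z \<le> x t")
    case True
    then obtain t0 where t0: "T \<le> t0" "z \<le> x t0" by blast
    have "z < x t" if "Suc t0 \<le> t" for t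
      using that
    proof (induction t rule: dec_induct)
      case base
      show ?case using stays_above t0 by blast
    next
      case (step t)
      then show ?case using stays_above t0 by simp
    qed
    then show ?thesis unfolding eventually_sequentially by blast
  next
    case False
    then have "\<forall>t\<ge>T. x t < z" by auto
    then show ?thesis unfolding eventually_sequentially by blast
  qed
qed

lemma tanh_affine_minus: "tanh (w * - y + - v) = - tanh (w * y + v :: real)"
  by (simp flip: tanh_minus)

lemma tanh_iteration_eventually_side_of_nonfixed:
  fixes w b0 z :: real and b x :: "nat \<Rightarrow> real"
  assumes "0 \<le> w" "b \<longlonglongrightarrow> b0" "\<And>t. x (Suc t) = tanh (w * x t + b t)" "tanh (w * z + b0) \<noteq> z"
  shows "eventually (\<lambda>t. z < x t) sequentially \<or> eventually (\<lambda>t. x t < z) sequentially"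
proof (cases "z < tanh (w * z + b0)")
  case True
  then show ?thesis by (rule tanh_iteration_eventually_side_of_gt[OF assms(1-3)])
next
  case False
  have "- x (Suc t) = tanh (w * - x t + - b t)" for t
    unfolding tanh_affine_minus assms(3) ..
  moreover have "- z < tanh (w * - z + - b0)"
    unfolding tanh_affine_minus using False assms(4) by linarith
  ultimately have "eventually (\<lambda>t. - z < - x t) sequentially \<or> eventually (\<lambda>t. - x t < - z) sequentially"
    by (rule tanh_iteration_eventually_side_of_gt[OF assms(1) tendsto_minus[OF assms(2)]])
  then show ?thesis by auto
qed

text \<open>\<open>L\<close> is the supremum of the eventual strict lower bounds of the orbit. Every
  non-fixed point above \<open>L\<close> is an eventual upper bound by the previous lemma, and such
  points are dense, so the orbit converges to \<open>L\<close>.\<close>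
lemma tanh_iteration_converges:
  fixes w b0 :: real and b x :: "nat \<Rightarrow> real"
  assumes "0 \<le> w" "b \<longlonglongrightarrow> b0" "\<And>t. x (Suc t) = tanh (w * x t + b t)"
  shows "x \<longlonglongrightarrow> lim x" "lim x = tanh (w * lim x + b0)"
proof -
  define A where "A = {z. eventually (\<lambda>t. z < x t) sequentially}"
  define L where "L = Sup A"
  have "-1 < x t" if "1 \<le> t" for t
    using that assms(3) tanh_real_gt_neg1 by (cases t) auto
  then have "-1 \<in> A"
    unfolding A_def eventually_sequentially by blast
  have "z \<le> 1" if z: "z \<in> A" for z
  proof -
    from z obtain N where "\<forall>n\<ge>N. z < x n" unfolding A_def eventually_sequentially by blast
    then have "z < x (Suc N)" by simp
    moreover have "x (Suc N) < 1" by (simp add: assms(3) tanh_real_lt_1)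
    ultimately show ?thesis by linarith
  qed
  then have bdd: "bdd_above A" by (rule bdd_aboveI)
  have lim_L: "x \<longlonglongrightarrow> L"
  proof (rule order_tendstoI)
    fix a assume "a < L"
    then obtain z where "z \<in> A" "a < z"
      using less_cSup_iff[OF _ bdd] \<open>-1 \<in> A\<close> unfolding L_def by blast
    then show "eventually (\<lambda>t. a < x t) sequentially"
      unfolding A_def by (auto elim: eventually_mono)
  next
    fix a assume "L < a"
    then obtain z where z: "L < z" "z < a" "tanh (w * z + b0) \<noteq> z"
      using tanh_nonfixed_point_between[OF assms(1)] by metis
    have "z \<notin> A" using cSup_upper[OF _ bdd] z(1) unfolding L_def by force
    then have "eventually (\<lambda>t. x t < z) sequentially"
      using tanh_iteration_eventually_side_of_nonfixed[OF assms z(3)] unfolding A_def by blast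
    then show "eventually (\<lambda>t. x t < a) sequentially"
      using z(2) by (auto elim: eventually_mono)
  qed
  then have "(\<lambda>t. tanh (w * x t + b t)) \<longlonglongrightarrow> tanh (w * L + b0)"
    by (intro tendsto_intros assms(2)) (auto intro: order_less_imp_not_eq2)
  moreover have "(\<lambda>t. tanh (w * x t + b t)) \<longlonglongrightarrow> L"
    using LIMSEQ_Suc[OF lim_L] by (simp add: assms(3))
  ultimately have "L = tanh (w * L + b0)" by (rule LIMSEQ_unique[rotated])
  with lim_L show "x \<longlonglongrightarrow> lim x" "lim x = tanh (w * lim x + b0)" by (simp_all add: limI)
qed

section \<open>The pivots\<close>

lemma tanh_artanh:
  fixes x :: real
  assumes "-1 < x" "x < 1"
  shows "tanh (artanh x) = x"
proof -
  have "exp (- 2 * artanh x) = (1 - x) / (1 + x)"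
    using assms by (simp add: artanh_def exp_minus exp_ln)
  then have "tanh (artanh x) = (1 - (1 - x) / (1 + x)) / (1 + (1 - x) / (1 + x))"
    by (simp only: tanh_real_altdef)
  also have "\<dots> = x" using assms by (simp add: field_simps)
  finally show ?thesis .
qed

lemma tanh_affine_eq_unique:
  fixes w v d :: real
  assumes "w \<noteq> 0" "-1 < d" "d < 1"
  shows "\<exists>!p. tanh (w * p + v) = d"
proof
  show "tanh (w * ((artanh d - v) / w) + v) = d"
    using assms by (simp add: tanh_artanh)
  show "p = (artanh d - v) / w" if "tanh (w * p + v) = d" for p
    using that assms by (metis artanh_tanh_real add_diff_cancel_right' nonzero_mult_div_cancel_left)
qed

lemma gfun_strict_mono_where_steep:
  fixes w v x y :: real
  assumes "1 < w" "x < y" "\<And>z. x < z \<Longrightarrow> z < y \<Longrightarrow> sqrt (1 - 1 / w) < \<bar>tanh (w * z + v)\<bar>"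
  shows "gfun w v x < gfun w v y"
proof (rule DERIV_pos_imp_increasing_open[OF assms(2)])
  fix z assume "x < z" "z < y"
  then have "(sqrt (1 - 1 / w))^2 < tanh (w * z + v)^2"
    using assms(3) sqrt_one_minus_inverse[OF assms(1)] by (intro power2_strict_mono) simp
  then have "w * (1 - 1 / w) < w * tanh (w * z + v)^2"
    using assms(1) sqrt_one_minus_inverse[OF assms(1)] by simp
  then have "0 < 1 - w * (1 - tanh (w * z + v)^2)"
    using assms(1) by (simp add: algebra_simps)
  then show "\<exists>d. (gfun w v has_real_derivative d) (at z) \<and> 0 < d"
    using gfun_has_real_derivative by blast
next
  show "continuous_on {x..y} (gfun w v)"
    using gfun_has_real_derivative by (intro DERIV_atLeastAtMost_imp_continuous_on) blast
qed

lemma gfun_strict_antimono_where_flat: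
  fixes w v x y :: real
  assumes "1 < w" "x < y" "\<And>z. x < z \<Longrightarrow> z < y \<Longrightarrow> \<bar>tanh (w * z + v)\<bar> < sqrt (1 - 1 / w)"
  shows "gfun w v y < gfun w v x"
proof (rule DERIV_neg_imp_decreasing_open[OF assms(2)])
  fix z assume "x < z" "z < y"
  then have "tanh (w * z + v)^2 < (sqrt (1 - 1 / w))^2"
    using assms(3) sqrt_one_minus_inverse[OF assms(1)] by (intro power2_strict_mono) simp
  then have "w * tanh (w * z + v)^2 < w * (1 - 1 / w)"
    using assms(1) sqrt_one_minus_inverse[OF assms(1)] by simp
  then have "1 - w * (1 - tanh (w * z + v)^2) < 0"
    using assms(1) by (simp add: algebra_simps)
  then show "\<exists>d. (gfun w v has_real_derivative d) (at z) \<and> d < 0"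
    using gfun_has_real_derivative by blast
next
  show "continuous_on {x..y} (gfun w v)"
    using gfun_has_real_derivative by (intro DERIV_atLeastAtMost_imp_continuous_on) blast
qed

text \<open>At a local maximum the derivative vanishes, so \<open>\<bar>tanh (w * p + v)\<bar> = sqrt (1 - 1 / w)\<close>;
  the positive sign is excluded because \<open>gfun w v\<close> is then strictly increasing to the right of \<open>p\<close>.\<close>
lemma is_loc_max_gfun_imp:
  fixes w v p :: real
  assumes "1 < w" "is_loc_max (gfun w v) p"
  shows "tanh (w * p + v) = - sqrt (1 - 1 / w)"
proof -
  obtain e where "0 < e" and e: "\<And>y. \<bar>y - p\<bar> < e \<Longrightarrow> gfun w v y \<le> gfun w v p"
    using assms(2) unfolding is_loc_max_def by blast
  have "1 - w * (1 - tanh (w * p + v)^2) = 0"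
    using DERIV_local_max[OF gfun_has_real_derivative \<open>0 < e\<close>] e by (simp add: abs_minus_commute)
  then have crit: "\<bar>tanh (w * p + v)\<bar> = sqrt (1 - 1 / w)"
    using slope_one_iff[OF assms(1)] by simp
  have "\<not> 0 < tanh (w * p + v)"
  proof
    assume pos: "0 < tanh (w * p + v)"
    have "gfun w v p < gfun w v (p + e / 2)"
    proof (rule gfun_strict_mono_where_steep[OF assms(1)])
      fix z assume "p < z"
      then have "tanh (w * p + v) < tanh (w * z + v)" using assms(1) by simp
      then show "sqrt (1 - 1 / w) < \<bar>tanh (w * z + v)\<bar>" using crit pos by linarith
    qed (use \<open>0 < e\<close> in simp)
    with e[of "p + e / 2"] \<open>0 < e\<close> show False by simp
  qed
  then show ?thesis using crit by (simp add: abs_if split: if_splits)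
qed

text \<open>With \<open>s = w * p + v < 0\<close>, the function \<open>gfun w v\<close> increases up to \<open>p\<close>, where
  \<open>\<bar>tanh\<bar>\<close> exceeds \<open>sqrt (1 - 1 / w)\<close>, and decreases on \<open>(p, p - 2 * s / w)\<close>, where the argument of
  \<open>tanh\<close> stays in \<open>(s, - s)\<close>.\<close>
lemma is_loc_max_gfun_if:
  fixes w v p :: real
  assumes "1 < w" "tanh (w * p + v) = - sqrt (1 - 1 / w)"
  shows "is_loc_max (gfun w v) p"
proof -
  define s where "s = w * p + v"
  have "0 < w" using assms(1) by simp
  have tanh_s: "tanh s = - sqrt (1 - 1 / w)" using assms(2) by (simp add: s_def)
  then have "tanh s < 0" using sqrt_one_minus_inverse[OF assms(1)] by simp
  then have "s < 0" by simp
  show ?thesis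
    unfolding is_loc_max_def
  proof (intro exI[of _ "- 2 * s / w"] conjI allI impI)
    show "0 < - 2 * s / w" using \<open>s < 0\<close> \<open>0 < w\<close> by (simp add: divide_neg_pos)
    fix y assume y: "\<bar>y - p\<bar> < - 2 * s / w"
    consider "y < p" | "y = p" | "p < y" by linarith
    then show "gfun w v y \<le> gfun w v p"
    proof cases
      case 1
      have "gfun w v y < gfun w v p"
      proof (rule gfun_strict_mono_where_steep[OF assms(1) 1])
        fix z assume "z < p"
        then have "tanh (w * z + v) < tanh s" using \<open>0 < w\<close> by (simp add: s_def)
        then show "sqrt (1 - 1 / w) < \<bar>tanh (w * z + v)\<bar>" using tanh_s by linarith
      qed
      then show ?thesis by simp
    next
      case 3
      have "w * y < w * p - 2 * s" using y 3 \<open>0 < w\<close> by (simp add: field_simps)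
      have "gfun w v y < gfun w v p"
      proof (rule gfun_strict_antimono_where_flat[OF assms(1) 3])
        fix z assume "p < z" "z < y"
        then have "w * p < w * z" "w * z < w * y" using \<open>0 < w\<close> by simp_all
        then have "s < w * z + v" "w * z + v < - s"
          using \<open>w * y < w * p - 2 * s\<close> s_def by linarith+
        then have "tanh s < tanh (w * z + v)" "tanh (w * z + v) < tanh (- s)"
          by (simp_all only: tanh_real_less_iff)
        then show "\<bar>tanh (w * z + v)\<bar> < sqrt (1 - 1 / w)"
          using tanh_s by (simp add: abs_less_iff)
      qed
      then show ?thesis by simp
    qed simp
  qed
qed

lemma is_loc_max_gfun_iff:
  "1 < w \<Longrightarrow> is_loc_max (gfun w v) p \<longleftrightarrow> tanh (w * p + v) = - sqrt (1 - 1 / w)"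
  using is_loc_max_gfun_imp is_loc_max_gfun_if by blast

lemma gfun_minus: "gfun w (- v) (- y) = - gfun w v y"
  unfolding gfun_def tanh_affine_minus by simp

lemma is_loc_min_gfun_iff_is_loc_max:
  "is_loc_min (gfun w v) p \<longleftrightarrow> is_loc_max (gfun w (- v)) (- p)"
proof -
  have "(\<forall>y. \<bar>y - p\<bar> < e \<longrightarrow> gfun w v p \<le> gfun w v y) \<longleftrightarrow>
      (\<forall>y. \<bar>- y - p\<bar> < e \<longrightarrow> gfun w v p \<le> gfun w v (- y))" for e
    by (metis minus_minus)
  moreover have "\<bar>- y - p\<bar> = \<bar>y - - p\<bar>" for y by linarith
  moreover have "gfun w v p \<le> gfun w v (- y) \<longleftrightarrow> gfun w (- v) y \<le> gfun w (- v) (- p)" for y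
    using gfun_minus[of w v "- y"] gfun_minus[of w v p] by simp
  ultimately show ?thesis unfolding is_loc_min_def is_loc_max_def by simp
qed

lemma is_loc_min_gfun_iff:
  fixes w v p :: real
  assumes "1 < w"
  shows "is_loc_min (gfun w v) p \<longleftrightarrow> tanh (w * p + v) = sqrt (1 - 1 / w)"
  unfolding is_loc_min_gfun_iff_is_loc_max is_loc_max_gfun_iff[OF assms] tanh_affine_minus by simp

lemma the1_eq_iff: "\<exists>!x. P x \<Longrightarrow> (THE x. P x) = a \<longleftrightarrow> P a"
  by (auto intro: the1_equality theI')

lemma pm_v_eq_iff:
  fixes w v p :: real
  assumes "1 < w"
  shows "pm_v w v = p \<longleftrightarrow> tanh (w * p + v) = - sqrt (1 - 1 / w)"
proof -
  have "\<exists>!p. tanh (w * p + v) = - sqrt (1 - 1 / w)"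
    using assms sqrt_one_minus_inverse[OF assms] by (intro tanh_affine_eq_unique) linarith+
  then show ?thesis
    unfolding pm_v_def is_loc_max_gfun_iff[OF assms] by (rule the1_eq_iff)
qed

lemma pp_v_eq_iff:
  fixes w v p :: real
  assumes "1 < w"
  shows "pp_v w v = p \<longleftrightarrow> tanh (w * p + v) = sqrt (1 - 1 / w)"
proof -
  have "\<exists>!p. tanh (w * p + v) = sqrt (1 - 1 / w)"
    using assms sqrt_one_minus_inverse[OF assms] by (intro tanh_affine_eq_unique) linarith+
  then show ?thesis
    unfolding pp_v_def is_loc_min_gfun_iff[OF assms] by (rule the1_eq_iff)
qed

text \<open>If the critical point \<open>q v\<close> of \<open>gfun w v\<close> is where \<open>tanh (w * _ + v) = d\<close>, then
  \<open>q v\<close> is a root of \<open>gfun w v\<close> exactly when \<open>q v = d\<close>; so the pivot, the critical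
  point for the unique bias making it a root, is \<open>d\<close> itself.\<close>
lemma pivot_eq:
  fixes w d :: real and q :: "real \<Rightarrow> real"
  assumes "-1 < d" "d < 1" "\<And>v p. q v = p \<longleftrightarrow> tanh (w * p + v) = d"
  shows "q (THE v. gfun w v (q v) = 0) = d"
proof -
  have root_iff: "gfun w v (q v) = 0 \<longleftrightarrow> q v = d" for v
    using assms(3)[of v "q v"] by (simp add: gfun_def)
  moreover have "q v = d \<longleftrightarrow> tanh (1 * v + w * d) = d" for v
    by (simp add: assms(3) add.commute)
  ultimately have "\<exists>!v. gfun w v (q v) = 0"
    using tanh_affine_eq_unique[of 1 d "w * d"] assms(1,2) by simp
  then have "gfun w (THE v. gfun w v (q v) = 0) (q (THE v. gfun w v (q v) = 0)) = 0" by (rule theI')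
  then show ?thesis using root_iff by blast
qed

lemma p_minus_eq: "1 < w \<Longrightarrow> p_minus w = - sqrt (1 - 1 / w)"
  unfolding p_minus_def using sqrt_one_minus_inverse[of w]
  by (intro pivot_eq pm_v_eq_iff) linarith+

lemma p_plus_eq: "1 < w \<Longrightarrow> p_plus w = sqrt (1 - 1 / w)"
  unfolding p_plus_def using sqrt_one_minus_inverse[of w]
  by (intro pivot_eq pp_v_eq_iff) linarith+

section \<open>Equilibria of the network and the relation \<open>\<sim>\<close>\<close>

lemma tanh_fixed_point_unique_kappa:
  fixes w :: "nat \<Rightarrow> real" and b x y :: real
  assumes "0 \<le> w j" "tanh (w j * x + b) = x" "tanh (w j * y + b) = y"
    and "kappa w k j x = kappa w k j y"
  shows "x = y"
proof (cases "1 < w j")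
  case False
  then show ?thesis using tanh_fixed_point_unique_of_le_1 assms(1-3) by simp
next
  case True
  have "0 < sqrt (1 - 1 / w j)" using sqrt_one_minus_inverse[OF True] by simp
  then have "\<not> x < y" if "tanh (w j * x + b) = x" "tanh (w j * y + b) = y"
      "kappa w k j x = kappa w k j y" for x y
    using that True tanh_no_two_fixed_points_in_region[OF True, of x y b]
    unfolding kappa_def p_minus_eq[OF True] p_plus_eq[OF True] by (auto split: if_splits)
  then show ?thesis using assms(2-4) by (metis linorder_neqE_linordered_idom)
qed

lemma nstep_length [simp]: "length (nstep w beta xs u) = length xs"
  by (simp add: nstep_def)

lemma nstep_nth: "j < length xs \<Longrightarrow> nstep w beta xs u ! j = tanh (w j * xs ! j + beta j u (take j xs))"
  by (simp add: nstep_def)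

lemma nstep_take: "take i (nstep w beta xs u) = nstep w beta (take i xs) u"
  by (rule nth_equalityI) (auto simp: nstep_nth)

lemma nstep_eq_self_iff:
  "nstep w beta s u = s \<longleftrightarrow> (\<forall>j<length s. tanh (w j * s ! j + beta j u (take j s)) = s ! j)"
  by (auto simp: list_eq_iff_nth_eq nstep_nth)

lemma funpow_nstep_length [simp]: "length (((\<lambda>z. nstep w beta z u) ^^ t) xs) = length xs"
  by (induction t) auto

lemma Sstar_length [simp]: "length (Sstar w beta ue xs) = length xs"
  by (simp add: Sstar_def)

text \<open>By strong induction on the neuron index: once the earlier neurons converge, the bias
  of neuron \<open>j\<close> converges by continuity, and neuron \<open>j\<close> is a driven \<open>tanh\<close> iteration.\<close>
lemma Sstar_nth_limit_fixed:
  fixes w :: "nat \<Rightarrow> real" and beta :: "nat \<Rightarrow> 'u \<Rightarrow> real list \<Rightarrow> real"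
  assumes "\<forall>j<length xs. 0 \<le> w j" "\<forall>j<length xs. list_continuous j (beta j ue)"
    and "j < length xs"
  shows "(\<lambda>t. (((\<lambda>z. nstep w beta z ue) ^^ t) xs) ! j) \<longlonglongrightarrow> Sstar w beta ue xs ! j
    \<and> Sstar w beta ue xs ! j = tanh (w j * Sstar w beta ue xs ! j + beta j ue (take j (Sstar w beta ue xs)))"
  using assms(3)
proof (induction j rule: less_induct)
  case (less j)
  define X where "X t = ((\<lambda>z. nstep w beta z ue) ^^ t) xs" for t
  define S where "S = Sstar w beta ue xs"
  have S_nth: "S ! j' = lim (\<lambda>t. X t ! j')" if "j' < length xs" for j'
    using that by (simp add: S_def X_def Sstar_def)
  have "(\<lambda>t. take j (X t) ! j') \<longlonglongrightarrow> take j S ! j'" if "j' < j" for j'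
    using less.IH[OF that] less.prems that by (simp add: X_def S_def)
  moreover have "list_continuous j (beta j ue)" using assms(2) less.prems by simp
  ultimately have bias: "(\<lambda>t. beta j ue (take j (X t))) \<longlonglongrightarrow> beta j ue (take j S)"
    using less.prems unfolding list_continuous_def by (simp add: X_def S_def)
  have step: "X (Suc t) ! j = tanh (w j * X t ! j + beta j ue (take j (X t)))" for t
    using less.prems by (simp add: X_def nstep_nth)
  have "0 \<le> w j" using assms(1) less.prems by simp
  from tanh_iteration_converges[OF this bias step] show ?case
    using S_nth[OF less.prems] by (simp add: X_def S_def)
qed

lemma nstep_Sstar:
  assumes "\<forall>j<length xs. 0 \<le> w j" "\<forall>j<length xs. list_continuous j (beta j ue)"
  shows "nstep w beta (Sstar w beta ue xs) ue = Sstar w beta ue xs"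
  unfolding nstep_eq_self_iff using Sstar_nth_limit_fixed[of xs w beta ue] assms by simp

lemma nstep_fixed_points_eq_if_kappa_eq:
  assumes "nstep w beta s u = s" "nstep w beta s' u = s'" "length s' = length s"
    and "\<forall>j<length s. 0 \<le> w j"
    and "map (\<lambda>j. kappa w k j (s ! j)) [0..<length s] = map (\<lambda>j. kappa w k j (s' ! j)) [0..<length s]"
  shows "s = s'"
proof -
  have "take j s = take j s'" if "j \<le> length s" for j
    using that
  proof (induction j)
    case (Suc j)
    then have "j < length s" by simp
    have "s ! j = s' ! j"
    proof (rule tanh_fixed_point_unique_kappa)
      show "0 \<le> w j" "kappa w k j (s ! j) = kappa w k j (s' ! j)"
        using assms(4,5) \<open>j < length s\<close> by (auto dest: map_eq_conv[THEN iffD1])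
      show "tanh (w j * s ! j + beta j u (take j s)) = s ! j"
        using assms(1) \<open>j < length s\<close> unfolding nstep_eq_self_iff by blast
      show "tanh (w j * s' ! j + beta j u (take j s)) = s' ! j"
        using assms(2,3) Suc.IH Suc.prems \<open>j < length s\<close> unfolding nstep_eq_self_iff by simp
    qed
    then show ?case
      using Suc.IH Suc.prems \<open>j < length s\<close> assms(3) by (simp add: take_Suc_conv_app_nth)
  qed simp
  then show ?thesis using assms(3) by (metis order_refl take_all)
qed

lemma Sstar_eq_if_etabar_eq:
  assumes "length ys = length xs" "\<forall>j<length xs. 0 \<le> w j"
    and "\<forall>j<length xs. list_continuous j (beta j ue)"
    and "etabar w beta ue k xs = etabar w beta ue k ys"
  shows "Sstar w beta ue xs = Sstar w beta ue ys"
proof (rule nstep_fixed_points_eq_if_kappa_eq[where u = ue and k = k])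
  show "nstep w beta (Sstar w beta ue xs) ue = Sstar w beta ue xs"
    using assms(2,3) by (rule nstep_Sstar)
  show "nstep w beta (Sstar w beta ue ys) ue = Sstar w beta ue ys"
    using assms(1-3) by (intro nstep_Sstar) simp_all
qed (use assms in \<open>simp_all add: etabar_def\<close>)

lemma simrel_subset:
  assumes "\<forall>z\<in>Xi. \<forall>u\<in>U. nstep w beta z u \<in> Xi"
  shows "simrel w beta U lam ue Xi \<subseteq> Xi \<times> Xi"
proof (intro subrelI)
  fix x y assume "(x, y) \<in> simrel w beta U lam ue Xi"
  then show "(x, y) \<in> Xi \<times> Xi" by (induction rule: simrel.induct) (use assms in auto)
qed

lemma nstep_prefixes_closed:
  assumes "\<forall>z\<in>X. \<forall>u\<in>U. nstep w beta z u \<in> X"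
  shows "\<forall>z\<in>prefixes X i. \<forall>u\<in>U. nstep w beta z u \<in> prefixes X i"
  using assms unfolding prefixes_def by (auto simp flip: nstep_take)

lemma set_etabar_subset:
  assumes "\<forall>j r. k j r \<in> {1, 2, 3}"
  shows "set (etabar w beta ue k xs) \<subseteq> {1, 2, 3}"
  using assms by (auto simp: etabar_def kappa_def simp del: insert_iff)

text \<open>The \<open>\<sim>\<close>-class of \<open>x\<close> has only finitely many \<open>etabar\<close>-values, so the
  minimum defining \<open>rhobar\<close> is attained.\<close>
lemma rhobar_attained:
  assumes "x \<in> Xi" "\<forall>z\<in>Xi. \<forall>u\<in>U. nstep w beta z u \<in> Xi" "\<forall>z\<in>Xi. length z = i"
    and "\<forall>j r. k j r \<in> {1, 2, 3}"
  obtains x' where "(x, x') \<in> simrel w beta U lam ue Xi"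
    "etabar w beta ue k x' = rhobar w beta U lam ue k Xi x"
proof -
  let ?E = "etabar w beta ue k ` {y. (x, y) \<in> simrel w beta U lam ue Xi}"
  have "(x, x) \<in> simrel w beta U lam ue Xi" by (rule simrel.base[OF assms(1) assms(1) refl])
  then have "?E \<noteq> {}" by blast
  have "?E \<subseteq> {l. set l \<subseteq> {1, 2, 3} \<and> length l = i}"
  proof
    fix l assume "l \<in> ?E"
    then obtain y where "(x, y) \<in> simrel w beta U lam ue Xi" "l = etabar w beta ue k y" by blast
    moreover from this have "length y = i" using simrel_subset[OF assms(2)] assms(3) by blast
    ultimately show "l \<in> {l. set l \<subseteq> {1, 2, 3} \<and> length l = i}"
      using set_etabar_subset[OF assms(4), of w beta ue y] by (simp add: etabar_def)
  qed
  then have "finite ?E" by (rule finite_subset) (simp add: finite_lists_length_eq)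
  then have "rhobar w beta U lam ue k Xi x \<in> ?E"
    unfolding rhobar_def using \<open>?E \<noteq> {}\<close> by (rule Min_in)
  then show thesis using that by (auto simp: image_iff)
qed

theorem proposition11:
  fixes n i :: nat and w :: "nat \<Rightarrow> real" and beta :: "nat \<Rightarrow> 'u \<Rightarrow> real list \<Rightarrow> real"
    and U :: "'u set" and X' :: "real list set" and lam :: "'u \<Rightarrow> 's" and ue :: 'u
    and k :: "nat \<Rightarrow> real \<Rightarrow> nat" and x y :: "real list"
  assumes "\<forall>j<n. 0 < w j"
    and "\<forall>j<n. \<forall>u\<in>U. list_continuous j (beta j u)"
    and "\<forall>j r. k j r \<in> {1, 2, 3}"
    and "\<forall>z\<in>X'. length z = n"
    and "\<forall>z\<in>X'. \<forall>u\<in>U. nstep w beta z u \<in> X'"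
    and "ue \<in> U"
    and "1 \<le> i" and "i \<le> n"
    and "x \<in> prefixes X' i" and "y \<in> prefixes X' i"
    and "rhobar w beta U lam ue k (prefixes X' i) x = rhobar w beta U lam ue k (prefixes X' i) y"
  shows "(x, y) \<in> simrel w beta U lam ue (prefixes X' i)"
proof -
  let ?Xi = "prefixes X' i" and ?R = "simrel w beta U lam ue (prefixes X' i)"
  have closed: "\<forall>z\<in>?Xi. \<forall>u\<in>U. nstep w beta z u \<in> ?Xi"
    using assms(5) by (rule nstep_prefixes_closed)
  have len: "\<forall>z\<in>?Xi. length z = i"
    using assms(4,8) by (auto simp: prefixes_def)
  obtain x' where x': "(x, x') \<in> ?R" "etabar w beta ue k x' = rhobar w beta U lam ue k ?Xi x"
    using rhobar_attained[OF assms(9) closed len assms(3)] by blast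
  obtain y' where y': "(y, y') \<in> ?R" "etabar w beta ue k y' = rhobar w beta U lam ue k ?Xi y"
    using rhobar_attained[OF assms(10) closed len assms(3)] by blast
  have "x' \<in> ?Xi" "y' \<in> ?Xi" using x'(1) y'(1) simrel_subset[OF closed] by auto
  moreover have "Sstar w beta ue x' = Sstar w beta ue y'"
  proof (rule Sstar_eq_if_etabar_eq)
    show "length y' = length x'" using len \<open>x' \<in> ?Xi\<close> \<open>y' \<in> ?Xi\<close> by simp
    show "\<forall>j<length x'. 0 \<le> w j" "\<forall>j<length x'. list_continuous j (beta j ue)"
      using assms(1,2,6,8) len \<open>x' \<in> ?Xi\<close> by (simp_all add: less_imp_le)
    show "etabar w beta ue k x' = etabar w beta ue k y'" using x'(2) y'(2) assms(11) by simp
  qed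
  ultimately have "(x', y') \<in> ?R" by (rule simrel.base)
  with x'(1) y'(1) show ?thesis by (meson simrel.sym simrel.trans)
qed

end
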